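(* Let $\mathcal{P}$ be a property of unordered partial systems that is monotone increasing (if $S\in\mathcal{P}$ and $S'\supseteq S$ then $S'\in\mathcal{P}$). Fix $\alpha\in(0,1)$ and $S\in\mathcal{O}_m$ for some $m\le N-\alpha N$. Let $\mathbf{S}$ have distribution $\mathbb{R}(S,\alpha N)$ and $\mathbf{S}^*$ have distribution $\mathbb{G}^*(S,\alpha/n)$. Then \[ \Pr\left(S\cup\mathbf{S}\notin\mathcal{P}\right)=O(1)\Pr\left(S\cup\mathbf{S}^*\notin\mathcal{P}\right), \] where $S\cup S'$ denotes the unordered partial system consisting of the hyperedges of $S$ and of $S'$.
   Context: Throughout, $n\equiv1$ or $3\pmod 6$, $N=\binom n2/3$, $\alpha N$ is treated as an integer and asymptotics are as $n\to\infty$. A partial system is a 3-uniform hypergraph on $[n]$ in which every pair of vertices lies in at most one hyperedge; $\mathcal{O}_m$ is the set of ordered partial systems with $m$ hyperedges. $G(S)$ is the graph on $[n]$ of pairs not contained in a hyperedge of $S$. For a partial system $S$, $\mathbb{G}(S,p)$ is the random 3-uniform hypergraph in which each triple not conflicting with $S$ (i.e. not intersecting a hyperedge of $S$ in at least 2 vertices, equivalently each triangle of $G(S)$) is included independently with probability $p$; $\mathbb{G}^*(S,p)$ is the partial system obtained from $\mathbb{G}(S,p)$ by deleting every hyperedge that intersects another hyperedge of it in at least 2 vertices. $\mathbb{R}(S,m)$ is the distribution of the partial system formed by the triangles removed in the first $m$ steps of the triangle removal process started from $G(S)$ (repeatedly deleting the edges of a uniformly random triangle of the current graph); if the process runs out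 of triangles before $m$ steps its output is the symbol $*$. Conventions: $*$ is a superset of every partial system, $*\in\mathcal{P}$, and $S\cup *=*$. *)

theory Defs
  imports "HOL-Probability.Probability"
begin

text \<open>Vertex set [n] is rendered as {..<n}. Hyperedges and graph edges are finite sets of vertices.\<close>

definition N_of :: "nat \<Rightarrow> real" where
  "N_of n = real (n choose 2) / 3"

definition partial_system :: "nat \<Rightarrow> nat set set \<Rightarrow> bool" where
  "partial_system n H \<longleftrightarrow>
     (\<forall>T\<in>H. T \<subseteq> {..<n} \<and> card T = 3) \<and>
     (\<forall>T\<in>H. \<forall>T'\<in>H. T \<noteq> T' \<longrightarrow> card (T \<inter> T') \<le> 1)"

definition ordered_systems :: "nat \<Rightarrow> nat \<Rightarrow> nat set list set" where
  "ordered_systems n m = {L. length L = m \<and> distinct L \<and> partial_system n (set L)}"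

definition pairs_of :: "nat set \<Rightarrow> nat set set" where
  "pairs_of T = {e. e \<subseteq> T \<and> card e = 2}"

definition graph_of :: "nat \<Rightarrow> nat set set \<Rightarrow> nat set set" where
  "graph_of n S = {e. e \<subseteq> {..<n} \<and> card e = 2 \<and> \<not> (\<exists>T\<in>S. e \<subseteq> T)}"

definition triangles :: "nat set set \<Rightarrow> nat set set" where
  "triangles E = {T. card T = 3 \<and> pairs_of T \<subseteq> E}"

text \<open>Triangle removal process run for k steps from graph E; None plays the role of the symbol *.\<close>
fun trp :: "nat set set \<Rightarrow> nat \<Rightarrow> nat set list option pmf" where
  "trp E 0 = return_pmf (Some [])"
| "trp E (Suc k) =
     (if triangles E = {} then return_pmf None
      else pmf_of_set (triangles E) \<bind>
             (\<lambda>T. map_pmf (map_option (Cons T)) (trp (E - pairs_of T) k)))"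

definition R_dist :: "nat \<Rightarrow> nat set list \<Rightarrow> nat \<Rightarrow> nat set list option pmf" where
  "R_dist n S m = trp (graph_of n (set S)) m"

definition G_dist :: "nat \<Rightarrow> nat set list \<Rightarrow> real \<Rightarrow> nat set set pmf" where
  "G_dist n S p =
     map_pmf (\<lambda>f. {T \<in> triangles (graph_of n (set S)). f T})
       (Pi_pmf (triangles (graph_of n (set S))) False (\<lambda>_. bernoulli_pmf p))"

definition delete_conflicts :: "nat set set \<Rightarrow> nat set set" where
  "delete_conflicts H = {T \<in> H. \<forall>T'\<in>H. T' \<noteq> T \<longrightarrow> card (T \<inter> T') \<le> 1}"

definition Gstar_dist :: "nat \<Rightarrow> nat set list \<Rightarrow> real \<Rightarrow> nat set set pmf" where
  "Gstar_dist n S p = map_pmf delete_conflicts (G_dist n S p)"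

fun sys_union :: "nat set list \<Rightarrow> nat set list option \<Rightarrow> nat set set option" where
  "sys_union S None = None"
| "sys_union S (Some L) = Some (set S \<union> set L)"

text \<open>Monotone increasing property of unordered partial systems on [n] (None = *, which is in P).\<close>
definition monotone_increasing :: "nat \<Rightarrow> (nat set set option \<Rightarrow> bool) \<Rightarrow> bool" where
  "monotone_increasing n P \<longleftrightarrow> P None \<and>
     (\<forall>A B. partial_system n A \<longrightarrow> partial_system n B \<longrightarrow> A \<subseteq> B \<longrightarrow> P (Some A) \<longrightarrow> P (Some B))"

end

theory Submission
  imports Defs
begin

text \<open>Run the triangle removal process by scanning a uniformly random ordering of all triangles of
  \<open>G(S)\<close> and keeping each triangle whose edges are all still present. Conditioned on its size k,
  the random hypergraph \<open>G(S,p)\<close> is the set of the first k triangles of such an ordering. If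
  \<open>k \<le> \<alpha>N\<close>, every triangle of this prefix that meets no other triangle of the prefix in two
  vertices is kept by the first \<open>\<alpha>N\<close> steps of the scan, so \<open>S \<union> G*(S,p)\<close> is contained in the
  output of the removal process; by monotonicity, whenever the removal process fails the property
  so does \<open>S \<union> G*(S,p)\<close>. Finally the size of \<open>G(S,p)\<close> is binomial with mean at most
  \<open>\<alpha>N - \<alpha>(n-1)/3\<close>, so by Cantelli's inequality it is at most \<open>\<alpha>N\<close> with probability at least
  \<open>\<alpha>/(\<alpha>+3)\<close>.\<close>

lemma pairs_of_nonempty:
  assumes "card T = 3"
  shows "pairs_of T \<noteq> {}"
proof -
  obtain x y z where "T = {x, y, z}" "x \<noteq> y" using assms by (auto simp: card_3_iff)
  then have "{x, y} \<in> pairs_of T" by (auto simp: pairs_of_def)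
  then show ?thesis by auto
qed

lemma triangles_mono: "E' \<subseteq> E \<Longrightarrow> triangles E' \<subseteq> triangles E"
  by (auto simp: triangles_def)

lemma triangle_not_in_removal: "T \<in> triangles E \<Longrightarrow> T \<notin> triangles (E - pairs_of T)"
  using pairs_of_nonempty by (fastforce simp: triangles_def)

lemma card_Int_le_1_iff_pairs_disjoint:
  assumes "finite T"
  shows "card (T \<inter> T') \<le> 1 \<longleftrightarrow> pairs_of T \<inter> pairs_of T' = {}"
proof
  assume le1: "card (T \<inter> T') \<le> 1"
  show "pairs_of T \<inter> pairs_of T' = {}"
  proof (rule ccontr)
    assume "pairs_of T \<inter> pairs_of T' \<noteq> {}"
    then obtain e where "e \<subseteq> T \<inter> T'" "card e = 2" by (auto simp: pairs_of_def)
    then show False using le1 card_mono[of "T \<inter> T'" e] assms by simp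
  qed
next
  assume disj: "pairs_of T \<inter> pairs_of T' = {}"
  show "card (T \<inter> T') \<le> 1"
  proof (rule ccontr)
    assume "\<not> card (T \<inter> T') \<le> 1"
    then have "2 \<le> card (T \<inter> T')" by simp
    then obtain e where "e \<subseteq> T \<inter> T'" "card e = 2" "finite e"
      by (rule obtain_subset_with_card_n)
    then show False using disj by (auto simp: pairs_of_def)
  qed
qed

lemma triangles_graph_of_subset:
  assumes "T \<in> triangles (graph_of n S)"
  shows "T \<subseteq> {..<n}"
proof -
  obtain x y z where T: "T = {x, y, z}" "x \<noteq> y" "y \<noteq> z"
    using assms unfolding triangles_def card_3_iff by blast
  then have "{x, y} \<in> pairs_of T" "{y, z} \<in> pairs_of T" by (auto simp: pairs_of_def)
  then have "{x, y} \<in> graph_of n S" "{y, z} \<in> graph_of n S"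
    using assms by (auto simp: triangles_def)
  then show ?thesis using T by (auto simp: graph_of_def)
qed

lemma triangles_graph_of_subset_3_subsets:
  "triangles (graph_of n S) \<subseteq> {T. T \<subseteq> {..<n} \<and> card T = 3}"
  using triangles_graph_of_subset by (auto simp: triangles_def)

lemma finite_triangles_graph_of: "finite (triangles (graph_of n S))"
  by (rule finite_subset[OF triangles_graph_of_subset_3_subsets]) simp

lemma card_triangles_graph_of: "card (triangles (graph_of n S)) \<le> n choose 3"
proof -
  have "card (triangles (graph_of n S)) \<le> card {T. T \<subseteq> {..<n} \<and> card T = 3}"
    by (rule card_mono[OF _ triangles_graph_of_subset_3_subsets]) simp
  also have "\<dots> = n choose 3" using n_subsets[of "{..<n}" 3] by simp
  finally show ?thesis .
qed

lemma partial_system_subset: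
  assumes "partial_system n B" "A \<subseteq> B"
  shows "partial_system n A"
  unfolding partial_system_def
proof (rule conjI)
  show "\<forall>T\<in>A. T \<subseteq> {..<n} \<and> card T = 3"
    using assms unfolding partial_system_def by (meson subsetD)
  show "\<forall>T\<in>A. \<forall>T'\<in>A. T \<noteq> T' \<longrightarrow> card (T \<inter> T') \<le> 1"
    using assms unfolding partial_system_def by (meson subsetD)
qed

lemma partial_system_Un_triangles:
  assumes S: "partial_system n S" and L: "L \<subseteq> triangles (graph_of n S)"
    and disj: "disjoint_family_on pairs_of L"
  shows "partial_system n (S \<union> L)"
  unfolding partial_system_def
proof (rule conjI; intro ballI impI)
  fix T assume "T \<in> S \<union> L"
  then show "T \<subseteq> {..<n} \<and> card T = 3"
  proof
    assume "T \<in> S"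
    then show ?thesis using S by (simp add: partial_system_def)
  next
    assume "T \<in> L"
    then have "T \<in> triangles (graph_of n S)" using L by blast
    then show ?thesis using triangles_graph_of_subset by (simp add: triangles_def)
  qed
next
  fix T T' assume TT': "T \<in> S \<union> L" "T' \<in> S \<union> L" "T \<noteq> T'"
  have new_old: "pairs_of U \<inter> pairs_of U' = {}" if "U \<in> L" "U' \<in> S" for U U'
  proof -
    have "pairs_of U \<subseteq> graph_of n S" using that L by (auto simp: triangles_def)
    moreover have "e \<notin> graph_of n S" if "e \<in> pairs_of U'" for e
      using that \<open>U' \<in> S\<close> by (auto simp: graph_of_def pairs_of_def)
    ultimately show ?thesis by blast
  qed
  have "card T = 3" using TT'(1) S L by (auto simp: partial_system_def triangles_def)
  then have "finite T" by (metis card.infinite zero_neq_numeral)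
  show "card (T \<inter> T') \<le> 1"
  proof (cases "T \<in> S \<and> T' \<in> S")
    case True
    then show ?thesis using S TT'(3) by (simp add: partial_system_def)
  next
    case False
    then have "pairs_of T \<inter> pairs_of T' = {}"
      using TT' new_old[of T T'] new_old[of T' T] disj
      by (auto simp: disjoint_family_on_def)
    then show ?thesis using card_Int_le_1_iff_pairs_disjoint[OF \<open>finite T\<close>] by simp
  qed
qed

section \<open>The removal process as a greedy scan of a random ordering\<close>

fun greedy_removal :: "nat set set \<Rightarrow> nat set list \<Rightarrow> nat \<Rightarrow> nat set list option" where
  "greedy_removal E xs 0 = Some []"
| "greedy_removal E [] (Suc k) = None"
| "greedy_removal E (T # xs) (Suc k) =
     (if T \<in> triangles E then map_option (Cons T) (greedy_removal (E - pairs_of T) xs k)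
      else greedy_removal E xs (Suc k))"

lemma greedy_removal_no_triangles: "triangles E = {} \<Longrightarrow> greedy_removal E xs (Suc k) = None"
  by (induction xs) auto

lemma bind_pmf_of_set_resample:
  assumes A: "finite A" and B: "B \<subseteq> A" "B \<noteq> {}"
  shows "pmf_of_set A \<bind> (\<lambda>x. if x \<in> B then f x else pmf_of_set B \<bind> f) = pmf_of_set B \<bind> f"
proof (rule pmf_eqI)
  fix y
  let ?q = "pmf (pmf_of_set B \<bind> f) y"
  let ?g = "\<lambda>x. pmf (if x \<in> B then f x else pmf_of_set B \<bind> f) y"
  have "finite B" using A B finite_subset by blast
  then have in_B: "(\<Sum>x\<in>B. ?g x) = card B * ?q"
    using B by (simp add: pmf_bind_pmf_of_set)
  have out_B: "(\<Sum>x\<in>A - B. ?g x) = card (A - B) * ?q" by simp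
  have "(\<Sum>x\<in>A. ?g x) = card A * ?q"
    using sum.subset_diff[OF B(1) A, of ?g] in_B out_B card_Diff_subset[OF \<open>finite B\<close> B(1)]
      card_mono[OF A B(1)] by (simp add: of_nat_diff algebra_simps)
  moreover have "A \<noteq> {}" using B by blast
  ultimately show "pmf (pmf_of_set A \<bind> (\<lambda>x. if x \<in> B then f x else pmf_of_set B \<bind> f)) y = ?q"
    using A by (simp add: pmf_bind_pmf_of_set)
qed

lemma greedy_removal_random_order_Suc:
  assumes "finite A" "A \<noteq> {}"
  shows "map_pmf (\<lambda>\<pi>. greedy_removal E \<pi> (Suc j)) (pmf_of_set (permutations_of_set A))
    = pmf_of_set A \<bind> (\<lambda>T. if T \<in> triangles E
        then map_pmf (map_option (Cons T)) (map_pmf (\<lambda>\<pi>. greedy_removal (E - pairs_of T) \<pi> j)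
          (pmf_of_set (permutations_of_set (A - {T}))))
        else map_pmf (\<lambda>\<pi>. greedy_removal E \<pi> (Suc j)) (pmf_of_set (permutations_of_set (A - {T}))))"
proof -
  have "map_pmf (\<lambda>\<pi>. greedy_removal E \<pi> (Suc j)) (pmf_of_set (permutations_of_set A))
      = pmf_of_set A \<bind> (\<lambda>T. map_pmf (\<lambda>\<pi>. greedy_removal E (T # \<pi>) (Suc j))
          (pmf_of_set (permutations_of_set (A - {T}))))"
    using assms by (simp add: random_permutation_of_set map_bind_pmf map_pmf_def bind_assoc_pmf
        bind_return_pmf)
  also have "\<dots> = pmf_of_set A \<bind> (\<lambda>T. if T \<in> triangles E
        then map_pmf (map_option (Cons T)) (map_pmf (\<lambda>\<pi>. greedy_removal (E - pairs_of T) \<pi> j)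
          (pmf_of_set (permutations_of_set (A - {T}))))
        else map_pmf (\<lambda>\<pi>. greedy_removal E \<pi> (Suc j)) (pmf_of_set (permutations_of_set (A - {T}))))"
    by (intro bind_pmf_cong refl) (simp add: pmf.map_comp o_def)
  finally show ?thesis .
qed

text \<open>Skipping a draw that is not a triangle of the current graph amounts to drawing again
  (\<open>bind_pmf_of_set_resample\<close>), so the scan of a uniformly random ordering of any finite
  superset of the triangles is the triangle removal process.\<close>
lemma trp_eq_greedy_removal:
  assumes "finite A" "triangles E \<subseteq> A"
  shows "trp E k = map_pmf (\<lambda>\<pi>. greedy_removal E \<pi> k) (pmf_of_set (permutations_of_set A))"
  using assms
proof (induction "card A" arbitrary: A E k rule: less_induct)
  case less
  consider "k = 0" | "triangles E = {}" "k \<noteq> 0" | j where "k = Suc j" "triangles E \<noteq> {}"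
    by (cases k) auto
  then show ?case
  proof cases
    case 3
    let ?step = "\<lambda>T. map_pmf (map_option (Cons T)) (trp (E - pairs_of T) j)"
    have A: "finite A" "A \<noteq> {}" using less.prems 3 by auto
    have "map_pmf (\<lambda>xs. greedy_removal E xs (Suc j)) (pmf_of_set (permutations_of_set (A - {T})))
        = pmf_of_set (triangles E) \<bind> ?step" if "T \<in> A" "T \<notin> triangles E" for T
    proof -
      have "triangles E \<subseteq> A - {T}" using that less.prems by auto
      moreover have "card (A - {T}) < card A" using A(1) that(1) by (rule card_Diff1_less)
      ultimately have "trp E k
          = map_pmf (\<lambda>xs. greedy_removal E xs k) (pmf_of_set (permutations_of_set (A - {T})))"
        using less.hyps A by blast
      then show ?thesis using 3 by simp
    qed
    moreover have "map_pmf (\<lambda>xs. greedy_removal (E - pairs_of T) xs j)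
        (pmf_of_set (permutations_of_set (A - {T}))) = trp (E - pairs_of T) j"
      if "T \<in> A" "T \<in> triangles E" for T
    proof -
      have "triangles (E - pairs_of T) \<subseteq> A - {T}"
        using that less.prems triangles_mono[of "E - pairs_of T" E] triangle_not_in_removal[of T E]
        by auto
      moreover have "card (A - {T}) < card A" using A(1) that(1) by (rule card_Diff1_less)
      ultimately show ?thesis using less.hyps A by simp
    qed
    ultimately have "map_pmf (\<lambda>\<pi>. greedy_removal E \<pi> k) (pmf_of_set (permutations_of_set A))
        = pmf_of_set A \<bind> (\<lambda>T. if T \<in> triangles E then ?step T else pmf_of_set (triangles E) \<bind> ?step)"
      unfolding 3 greedy_removal_random_order_Suc[OF A] using A by (intro bind_pmf_cong) auto
    also have "\<dots> = pmf_of_set (triangles E) \<bind> ?step"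
      using A 3 less.prems by (intro bind_pmf_of_set_resample) auto
    finally show ?thesis using 3 by simp
  qed (auto simp: greedy_removal_no_triangles map_pmf_const gr0_conv_Suc)
qed

lemma greedy_removal_edge_disjoint:
  "greedy_removal E \<pi> k = Some L \<Longrightarrow> set L \<subseteq> triangles E \<and> disjoint_family_on pairs_of (set L)"
proof (induction E \<pi> k arbitrary: L rule: greedy_removal.induct)
  case (3 E T xs k)
  show ?case
  proof (cases "T \<in> triangles E")
    case True
    with "3.prems" obtain L' where L: "L = T # L'" "greedy_removal (E - pairs_of T) xs k = Some L'"
      by auto
    from "3.IH"(1)[OF True L(2)]
    have IH: "set L' \<subseteq> triangles (E - pairs_of T)" "disjoint_family_on pairs_of (set L')" by auto
    then have "set L' \<subseteq> triangles E" using triangles_mono[of "E - pairs_of T" E] by auto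
    moreover have "pairs_of T' \<inter> pairs_of T = {}" if "T' \<in> set L'" for T'
      using IH(1) that by (auto simp: triangles_def)
    ultimately show ?thesis
      using True IH(2) L(1) by (auto simp: disjoint_family_on_def)
  next
    case False
    then show ?thesis using "3.prems" "3.IH"(2) by simp
  qed
qed (auto simp: disjoint_family_on_def)

text \<open>Edges are only removed by triangles scanned earlier, which lie in the prefix; so such a
  triangle is still a triangle of the current graph when the scan reaches it.\<close>
lemma greedy_removal_keeps_isolated:
  "greedy_removal E \<pi> M = Some L \<Longrightarrow> k \<le> M \<Longrightarrow> T \<in> set (take k \<pi>) \<Longrightarrow> T \<in> triangles E \<Longrightarrow>
   \<forall>T'\<in>set (take k \<pi>). T' \<noteq> T \<longrightarrow> card (T \<inter> T') \<le> 1 \<Longrightarrow> T \<in> set L"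
proof (induction \<pi> arbitrary: E M k L)
  case (Cons U \<pi>)
  obtain k' where k: "k = Suc k'" using Cons.prems(3) by (cases k) auto
  obtain M' where M: "M = Suc M'" using Cons.prems(2) k by (cases M) auto
  have "finite T" using Cons.prems(4) by (auto simp: triangles_def card_ge_0_finite)
  show ?case
  proof (cases "U \<in> triangles E")
    case True
    with Cons.prems(1) M obtain L' where
      L: "L = U # L'" "greedy_removal (E - pairs_of U) \<pi> M' = Some L'" by auto
    show ?thesis
    proof (cases "T = U")
      case False
      then have "pairs_of T \<inter> pairs_of U = {}"
        using Cons.prems(5) k card_Int_le_1_iff_pairs_disjoint[OF \<open>finite T\<close>] by auto
      then have "T \<in> triangles (E - pairs_of U)" using Cons.prems(4) by (auto simp: triangles_def)
      then have "T \<in> set L'"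
        using Cons.IH[OF L(2)] Cons.prems False k M by auto
      then show ?thesis using L by simp
    qed (use L in simp)
  next
    case False
    then have "T \<noteq> U" using Cons.prems(4) by auto
    have "greedy_removal E \<pi> M = Some L" using Cons.prems(1) False M by simp
    then show ?thesis
    proof (rule Cons.IH[OF _ _ _ Cons.prems(4)])
      show "k' \<le> M" using Cons.prems(2) k by simp
      show "T \<in> set (take k' \<pi>)" using Cons.prems(3) k \<open>T \<noteq> U\<close> by simp
      show "\<forall>T'\<in>set (take k' \<pi>). T' \<noteq> T \<longrightarrow> card (T \<inter> T') \<le> 1" using Cons.prems(5) k by auto
    qed
  qed
qed simp

lemma delete_conflicts_prefix_subset_greedy_removal:
  assumes "set \<pi> \<subseteq> triangles E" "greedy_removal E \<pi> M = Some L" "k \<le> M"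
  shows "delete_conflicts (set (take k \<pi>)) \<subseteq> set L"
proof
  fix T assume "T \<in> delete_conflicts (set (take k \<pi>))"
  then have T: "T \<in> set (take k \<pi>)" "\<forall>T'\<in>set (take k \<pi>). T' \<noteq> T \<longrightarrow> card (T \<inter> T') \<le> 1"
    by (auto simp: delete_conflicts_def)
  then have "T \<in> triangles E" using assms(1) by (meson in_set_takeD subsetD)
  then show "T \<in> set L" by (rule greedy_removal_keeps_isolated[OF assms(2,3) T(1) _ T(2)])
qed

lemma not_P_removal_imp_not_P_prefix:
  assumes mono: "monotone_increasing n P" and S: "partial_system n (set S)"
    and \<pi>: "set \<pi> = triangles (graph_of n (set S))" and k: "k \<le> M"
    and fail: "\<not> P (sys_union S (greedy_removal (graph_of n (set S)) \<pi> M))"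
  shows "\<not> P (Some (set S \<union> delete_conflicts (set (take k \<pi>))))"
proof -
  obtain L where L: "greedy_removal (graph_of n (set S)) \<pi> M = Some L"
    using fail mono by (cases "greedy_removal (graph_of n (set S)) \<pi> M")
      (auto simp: monotone_increasing_def)
  have sub: "set S \<union> delete_conflicts (set (take k \<pi>)) \<subseteq> set S \<union> set L"
    using delete_conflicts_prefix_subset_greedy_removal[OF _ L k] \<pi> by blast
  have "partial_system n (set S \<union> set L)"
    using greedy_removal_edge_disjoint[OF L] partial_system_Un_triangles[OF S] by blast
  moreover have "\<not> P (Some (set S \<union> set L))" using fail L by simp
  ultimately show ?thesis
    using mono sub partial_system_subset unfolding monotone_increasing_def by blast
qed

section \<open>Random subsets as prefixes of random orderings\<close>

lemma card_permutations_with_prefix_set: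
  assumes A: "finite A" and B: "B \<subseteq> A" "card B = k"
  shows "card {\<pi> \<in> permutations_of_set A. set (take k \<pi>) = B} = fact k * fact (card A - k)"
proof -
  let ?F = "{\<pi> \<in> permutations_of_set A. set (take k \<pi>) = B}"
  let ?X = "permutations_of_set B \<times> permutations_of_set (A - B)"
  let ?append = "\<lambda>(a, b). a @ b"
  have len: "length a = k" if "a \<in> permutations_of_set B" for a
    using that B by (auto simp: permutations_of_set_def distinct_card[symmetric])
  have inj: "inj_on ?append ?X"
  proof (rule inj_onI)
    fix x y assume "x \<in> ?X" "y \<in> ?X" "?append x = ?append y"
    then show "x = y" using len by (cases x; cases y) (auto simp: append_eq_append_conv)
  qed
  have img: "?append ` ?X = ?F"
  proof
    show "?append ` ?X \<subseteq> ?F"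
    proof clarify
      fix a b assume a: "a \<in> permutations_of_set B" and b: "b \<in> permutations_of_set (A - B)"
      have "take k (a @ b) = a" using len[OF a] by simp
      then show "a @ b \<in> permutations_of_set A \<and> set (take k (a @ b)) = B"
        using a b B by (auto simp: permutations_of_set_def)
    qed
  next
    show "?F \<subseteq> ?append ` ?X"
    proof
      fix \<pi> assume "\<pi> \<in> ?F"
      then have \<pi>: "distinct \<pi>" "set \<pi> = A" "B = set (take k \<pi>)"
        by (auto simp: permutations_of_set_def)
      have "distinct (take k \<pi> @ drop k \<pi>)" using \<pi>(1) by simp
      then have "set (take k \<pi>) \<inter> set (drop k \<pi>) = {}" by (simp only: distinct_append)
      moreover have "set (take k \<pi>) \<union> set (drop k \<pi>) = A"
        using \<pi>(2) by (metis set_append append_take_drop_id)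
      ultimately have "set (drop k \<pi>) = A - B" using \<pi>(3) by blast
      then have "(take k \<pi>, drop k \<pi>) \<in> ?X" using \<pi> by (auto simp: permutations_of_set_def)
      moreover have "\<pi> = ?append (take k \<pi>, drop k \<pi>)" by simp
      ultimately show "\<pi> \<in> ?append ` ?X" by blast
    qed
  qed
  have "card ?F = card ?X" using card_image[OF inj] img by simp
  also have "\<dots> = fact k * fact (card A - k)"
    using A B by (simp add: card_cartesian_product card_Diff_subset finite_subset)
  finally show ?thesis .
qed

lemma pmf_random_prefix:
  assumes A: "finite A" and B: "B \<subseteq> A" and k: "k \<le> card A"
  shows "pmf (map_pmf (\<lambda>\<pi>. set (take k \<pi>)) (pmf_of_set (permutations_of_set A))) B
       = (if card B = k then fact k * fact (card A - k) / fact (card A) else 0)"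
proof -
  let ?F = "{\<pi> \<in> permutations_of_set A. set (take k \<pi>) = B}"
  have "permutations_of_set A \<inter> (\<lambda>\<pi>. set (take k \<pi>)) -` {B} = ?F" by auto
  then have pmf: "pmf (map_pmf (\<lambda>\<pi>. set (take k \<pi>)) (pmf_of_set (permutations_of_set A))) B
      = card ?F / fact (card A)"
    using A by (simp add: pmf_map measure_pmf_of_set card_permutations_of_set)
  show ?thesis
  proof (cases "card B = k")
    case True
    then show ?thesis using pmf card_permutations_with_prefix_set[OF A B True] by simp
  next
    case False
    have "card (set (take k \<pi>)) = k" if "\<pi> \<in> permutations_of_set A" for \<pi>
    proof -
      have "distinct \<pi>" "length \<pi> = card A"
        using that by (auto simp: permutations_of_set_def distinct_card[symmetric])
      then show ?thesis using k by (simp add: distinct_card)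
    qed
    then have "?F = {}" using False by auto
    then show ?thesis using pmf False by simp
  qed
qed

lemma pmf_random_subset:
  assumes A: "finite A" and B: "B \<subseteq> A" and p: "p \<in> {0..1}"
  shows "pmf (map_pmf (\<lambda>f. {x \<in> A. f x}) (Pi_pmf A False (\<lambda>_. bernoulli_pmf p))) B
       = p ^ card B * (1 - p) ^ (card A - card B)"
proof -
  let ?\<rho> = "Pi_pmf A False (\<lambda>_. bernoulli_pmf p)"
  let ?F = "\<lambda>f. {x \<in> A. f x}"
  let ?\<chi> = "\<lambda>x. x \<in> B"
  have fiber: "?F -` {B} \<inter> set_pmf ?\<rho> = {?\<chi>} \<inter> set_pmf ?\<rho>"
  proof (intro equalityI subsetI)
    fix f assume f: "f \<in> ?F -` {B} \<inter> set_pmf ?\<rho>"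
    then have "\<not> f x" if "x \<notin> A" for x
      using that set_Pi_pmf_subset[OF A, of False "\<lambda>_. bernoulli_pmf p"] by blast
    moreover have "?F f = B" using f by simp
    ultimately have "f = ?\<chi>" by (auto intro!: ext)
    then show "f \<in> {?\<chi>} \<inter> set_pmf ?\<rho>" using f by simp
  next
    fix f assume "f \<in> {?\<chi>} \<inter> set_pmf ?\<rho>"
    moreover have "?F ?\<chi> = B" using B by blast
    ultimately show "f \<in> ?F -` {B} \<inter> set_pmf ?\<rho>" by auto
  qed
  have "pmf (map_pmf ?F ?\<rho>) B = measure_pmf.prob ?\<rho> (?F -` {B})" by (rule pmf_map)
  also have "\<dots> = measure_pmf.prob ?\<rho> (?F -` {B} \<inter> set_pmf ?\<rho>)"
    by (rule measure_Int_set_pmf[symmetric])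
  also have "\<dots> = pmf ?\<rho> ?\<chi>"
    by (simp only: fiber measure_Int_set_pmf measure_pmf_single)
  also have "\<dots> = (\<Prod>x\<in>A. pmf (bernoulli_pmf p) (x \<in> B))"
    using A B by (intro pmf_Pi') auto
  also have "\<dots> = (\<Prod>x\<in>B. pmf (bernoulli_pmf p) (x \<in> B)) * (\<Prod>x\<in>A - B. pmf (bernoulli_pmf p) (x \<in> B))"
    using prod.subset_diff[OF B A] by (simp only: mult.commute)
  also have "\<dots> = p ^ card B * (1 - p) ^ (card A - card B)"
    using A B p by (simp add: card_Diff_subset finite_subset)
  finally show ?thesis .
qed

lemma pmf_binomial_bind:
  assumes p: "p \<in> {0..1}"
  shows "pmf (binomial_pmf t p \<bind> f) x = (\<Sum>k\<le>t. pmf (binomial_pmf t p) k * pmf (f k) x)"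
proof -
  have "0 \<le> p" "p \<le> 1" using p by auto
  then show ?thesis
    unfolding pmf_bind expectation_binomial_pmf'[OF p] pmf_binomial[OF \<open>0 \<le> p\<close> \<open>p \<le> 1\<close>]
    by simp
qed

lemma prob_binomial_bind:
  assumes p: "p \<in> {0..1}"
  shows "measure_pmf.prob (binomial_pmf t p \<bind> f) X
       = (\<Sum>k\<le>t. pmf (binomial_pmf t p) k * measure_pmf.prob (f k) X)"
proof -
  have "0 \<le> p" "p \<le> 1" using p by auto
  have "measure_pmf.prob (binomial_pmf t p \<bind> f) X
      = measure_pmf.expectation (binomial_pmf t p) (\<lambda>k. measure_pmf.prob (f k) X)"
    unfolding measure_pmf_bind
    by (rule measure_pmf.measure_bind[where N = "count_space UNIV"])
       (auto simp: measurable_pmf_measure1 intro: measure_pmf_in_subprob_algebra)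
  then show ?thesis
    unfolding expectation_binomial_pmf'[OF p] pmf_binomial[OF \<open>0 \<le> p\<close> \<open>p \<le> 1\<close>] by simp
qed

lemma random_subset_eq_binomial_prefix:
  assumes A: "finite A" and p: "p \<in> {0..1}"
  shows "map_pmf (\<lambda>f. {x \<in> A. f x}) (Pi_pmf A False (\<lambda>_. bernoulli_pmf p))
       = binomial_pmf (card A) p \<bind>
           (\<lambda>k. map_pmf (\<lambda>\<pi>. set (take k \<pi>)) (pmf_of_set (permutations_of_set A)))"
    (is "?subset = binomial_pmf (card A) p \<bind> ?prefix")
proof (rule pmf_eqI)
  fix B
  show "pmf ?subset B = pmf (binomial_pmf (card A) p \<bind> ?prefix) B"
  proof (cases "B \<subseteq> A")
    case True
    have "card B \<le> card A" using A True by (rule card_mono)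
    have "pmf (binomial_pmf (card A) p \<bind> ?prefix) B
        = (\<Sum>k\<le>card A. pmf (binomial_pmf (card A) p) k * pmf (?prefix k) B)"
      by (rule pmf_binomial_bind[OF p])
    also have "\<dots> = (\<Sum>k\<le>card A. if k = card B
        then pmf (binomial_pmf (card A) p) k * (fact k * fact (card A - k) / fact (card A)) else 0)"
      using A True by (intro sum.cong) (auto simp: pmf_random_prefix)
    also have "\<dots> = pmf (binomial_pmf (card A) p) (card B)
        * (fact (card B) * fact (card A - card B) / fact (card A))"
      using \<open>card B \<le> card A\<close> by simp
    also have "\<dots> = p ^ card B * (1 - p) ^ (card A - card B)"
      using \<open>card B \<le> card A\<close> p by (simp add: binomial_fact)
    finally show ?thesis using pmf_random_subset[OF A True p] by simp
  next
    case False
    have "set_pmf ?subset \<subseteq> Pow A" unfolding set_map_pmf by blast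
    moreover have "set_pmf (pmf_of_set (permutations_of_set A)) = permutations_of_set A"
      by (rule set_pmf_of_set) (simp_all add: A)
    then have "set_pmf (binomial_pmf (card A) p \<bind> ?prefix) \<subseteq> Pow A"
      unfolding set_bind_pmf set_map_pmf by (auto dest: permutations_of_setD(1) in_set_takeD)
    ultimately have "pmf ?subset B = 0" "pmf (binomial_pmf (card A) p \<bind> ?prefix) B = 0"
      unfolding pmf_eq_0_set_pmf using False by blast+
    then show ?thesis by simp
  qed
qed

section \<open>The number of triangles of the random hypergraph\<close>

lemma sum_pmf_binomial:
  assumes "p \<in> {0..1}"
  shows "(\<Sum>k\<le>t. pmf (binomial_pmf t p) k) = 1"
  using assms by (intro sum_pmf_eq_1) (auto simp: set_pmf_binomial_eq)

lemma pmf_binomial_Suc_Suc: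
  assumes "p \<in> {0..1}"
  shows "pmf (binomial_pmf (Suc u) p) (Suc k) * real (Suc k) = real (Suc u) * p * pmf (binomial_pmf u p) k"
proof -
  have p: "0 \<le> p" "p \<le> 1" using assms by auto
  have choose: "real (Suc k) * real (Suc u choose Suc k) = real (Suc u) * real (u choose k)"
    using Suc_times_binomial[of k u] by (metis of_nat_mult)
  have "pmf (binomial_pmf (Suc u) p) (Suc k) * real (Suc k)
      = (real (Suc k) * real (Suc u choose Suc k)) * p * (p ^ k * (1 - p) ^ (u - k))"
    unfolding pmf_binomial[OF p] by (simp del: binomial_Suc_Suc of_nat_Suc add: mult_ac)
  also have "\<dots> = real (Suc u) * real (u choose k) * p * (p ^ k * (1 - p) ^ (u - k))"
    by (simp only: choose)
  also have "\<dots> = real (Suc u) * p * pmf (binomial_pmf u p) k"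
    unfolding pmf_binomial[OF p] by (simp del: of_nat_Suc add: mult_ac)
  finally show ?thesis .
qed

lemma binomial_mean:
  assumes p: "p \<in> {0..1}"
  shows "(\<Sum>k\<le>t. pmf (binomial_pmf t p) k * real k) = real t * p"
proof (cases t)
  case (Suc u)
  have "(\<Sum>k\<le>t. pmf (binomial_pmf t p) k * real k)
      = (\<Sum>k\<le>u. pmf (binomial_pmf (Suc u) p) (Suc k) * real (Suc k))"
    unfolding Suc by (subst sum.atMost_Suc_shift) simp
  also have "\<dots> = (\<Sum>k\<le>u. real (Suc u) * p * pmf (binomial_pmf u p) k)"
    by (simp only: pmf_binomial_Suc_Suc[OF p])
  also have "\<dots> = real (Suc u) * p"
    by (simp add: sum_distrib_left[symmetric] sum_pmf_binomial[OF p])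
  finally show ?thesis using Suc by simp
qed simp

lemma binomial_second_factorial_moment:
  assumes p: "p \<in> {0..1}"
  shows "(\<Sum>k\<le>t. pmf (binomial_pmf t p) k * (real k * (real k - 1))) = real t * (real t - 1) * p\<^sup>2"
proof (cases t)
  case (Suc u)
  have "(\<Sum>k\<le>t. pmf (binomial_pmf t p) k * (real k * (real k - 1)))
      = (\<Sum>k\<le>u. pmf (binomial_pmf (Suc u) p) (Suc k) * real (Suc k) * real k)"
    unfolding Suc by (subst sum.atMost_Suc_shift) (simp add: algebra_simps)
  also have "\<dots> = (\<Sum>k\<le>u. real (Suc u) * p * (pmf (binomial_pmf u p) k * real k))"
    by (simp only: pmf_binomial_Suc_Suc[OF p] mult.assoc)
  also have "\<dots> = real (Suc u) * p * (real u * p)"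
    by (simp add: sum_distrib_left[symmetric] binomial_mean[OF p])
  finally show ?thesis using Suc by (simp add: power2_eq_square algebra_simps)
qed simp

lemma binomial_sum_square_deviation:
  assumes p: "p \<in> {0..1}"
  shows "(\<Sum>k\<le>t. pmf (binomial_pmf t p) k * (real k - c)\<^sup>2)
       = real t * p * (1 - p) + (real t * p - c)\<^sup>2"
proof -
  let ?w = "pmf (binomial_pmf t p)"
  have "?w k * (real k - c)\<^sup>2
      = ?w k * (real k * (real k - 1)) + (1 - 2 * c) * (?w k * real k) + c\<^sup>2 * ?w k" for k
    by (simp add: power2_eq_square algebra_simps)
  then have "(\<Sum>k\<le>t. ?w k * (real k - c)\<^sup>2)
      = (\<Sum>k\<le>t. ?w k * (real k * (real k - 1))) + (1 - 2 * c) * (\<Sum>k\<le>t. ?w k * real k)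
        + c\<^sup>2 * (\<Sum>k\<le>t. ?w k)"
    by (simp only: sum.distrib sum_distrib_left)
  also have "\<dots> = real t * p * (1 - p) + (real t * p - c)\<^sup>2"
    by (simp only: binomial_second_factorial_moment[OF p] binomial_mean[OF p] sum_pmf_binomial[OF p])
       (simp add: power2_eq_square algebra_simps)
  finally show ?thesis .
qed

lemma prob_binomial_pmf:
  assumes "p \<in> {0..1}"
  shows "measure_pmf.prob (binomial_pmf t p) X = (\<Sum>k\<le>t. pmf (binomial_pmf t p) k * indicator X k)"
  using prob_binomial_bind[OF assms, of t return_pmf X] by (simp add: bind_return_pmf')

text \<open>Cantelli's one-sided Chebyshev inequality for the binomial distribution, via
  \<open>1 - indicator {..M} k \<le> (k - c)\<^sup>2 / (d + s)\<^sup>2\<close> with the optimal shift \<open>s = V / d\<close>.\<close>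
lemma binomial_atMost_Cantelli:
  assumes p: "p \<in> {0..1}" and d: "0 < d" "real t * p + d \<le> real M + 1"
  shows "d\<^sup>2 / (real t * p * (1 - p) + d\<^sup>2) \<le> measure_pmf.prob (binomial_pmf t p) {..M}"
proof -
  let ?w = "pmf (binomial_pmf t p)"
  define V where "V = real t * p * (1 - p)"
  define s where "s = V / d"
  define c where "c = real t * p - s"
  have "0 \<le> V" using p by (simp add: V_def)
  then have "0 \<le> s" "0 < V + d\<^sup>2" using d by (simp_all add: s_def add_nonneg_pos)
  have tail: "1 - indicator {..M} k \<le> (real k - c)\<^sup>2 / (d + s)\<^sup>2" for k
  proof (cases "k \<le> M")
    case False
    then have "d + s \<le> real k - c" using d(2) by (simp add: c_def)
    then have "(d + s)\<^sup>2 \<le> (real k - c)\<^sup>2" using d \<open>0 \<le> s\<close> by (intro power_mono) auto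
    then show ?thesis using False d \<open>0 \<le> s\<close> by simp
  qed simp
  have "1 - measure_pmf.prob (binomial_pmf t p) {..M} = (\<Sum>k\<le>t. ?w k * (1 - indicator {..M} k))"
    by (simp add: prob_binomial_pmf[OF p] sum_pmf_binomial[OF p] right_diff_distrib sum_subtractf)
  also have "\<dots> \<le> (\<Sum>k\<le>t. ?w k * ((real k - c)\<^sup>2 / (d + s)\<^sup>2))"
    by (intro sum_mono mult_left_mono tail) simp
  also have "\<dots> = (V + s\<^sup>2) / (d + s)\<^sup>2"
    by (simp add: sum_divide_distrib[symmetric] binomial_sum_square_deviation[OF p] V_def c_def)
  also have "\<dots> = V / (V + d\<^sup>2)"
  proof -
    have "V + s\<^sup>2 = V * (V + d\<^sup>2) / d\<^sup>2" "(d + s)\<^sup>2 = (V + d\<^sup>2)\<^sup>2 / d\<^sup>2"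
      using d by (simp_all add: s_def field_simps power2_eq_square)
    then show ?thesis using d \<open>0 < V + d\<^sup>2\<close> by (simp add: power2_eq_square)
  qed
  finally have "1 - V / (V + d\<^sup>2) \<le> measure_pmf.prob (binomial_pmf t p) {..M}" by simp
  moreover have "1 - V / (V + d\<^sup>2) = d\<^sup>2 / (V + d\<^sup>2)"
    using \<open>0 < V + d\<^sup>2\<close> by (simp add: field_simps)
  ultimately show ?thesis by (simp add: V_def)
qed

lemma real_choose_2: "2 * real (n choose 2) = real n * (real n - 1)"
proof (induction n)
  case (Suc n)
  have "Suc n choose 2 = n + (n choose 2)" by (simp add: numeral_2_eq_2)
  then show ?case using Suc by (simp add: algebra_simps)
qed simp

lemma real_choose_3: "6 * real (n choose 3) = real n * (real n - 1) * (real n - 2)"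
proof (induction n)
  case (Suc n)
  have "Suc n choose 3 = (n choose 2) + (n choose 3)" by (simp add: numeral_3_eq_3 numeral_2_eq_2)
  then show ?case using Suc real_choose_2[of n] by (simp add: algebra_simps)
qed simp

lemma triangle_count_mean_bound:
  assumes "0 \<le> \<alpha>" "0 < n" "t \<le> n choose 3"
  shows "6 * (real t * (\<alpha> / real n)) \<le> \<alpha> * (real n - 1) * (real n - 2)"
proof -
  have "6 * real t \<le> real n * (real n - 1) * (real n - 2)"
    using assms(3) real_choose_3[of n]
    by (metis mult_le_cancel_left_pos of_nat_le_iff zero_less_numeral)
  then have "\<alpha> * (6 * real t) \<le> \<alpha> * (real n * (real n - 1) * (real n - 2))"
    using assms(1) by (rule mult_left_mono)
  moreover have "6 * (real t * (\<alpha> / real n)) * real n = \<alpha> * (6 * real t)" using assms(2) by simp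
  ultimately have "6 * (real t * (\<alpha> / real n)) * real n \<le> \<alpha> * (real n - 1) * (real n - 2) * real n"
    by (simp add: algebra_simps)
  then show ?thesis by (rule mult_right_le_imp_le) (use assms(2) in simp)
qed

text \<open>The number of triangles of \<open>G(S,\<alpha>/n)\<close> has mean at most \<open>\<alpha>(n-1)(n-2)/6\<close>, which lies
  below \<open>\<alpha>N\<close> by the margin \<open>\<alpha>(n-1)/3\<close>; Cantelli's inequality turns this margin into a
  probability bounded away from zero.\<close>
lemma binomial_triangle_count_atMost:
  fixes \<alpha> :: real
  assumes \<alpha>: "0 < \<alpha>" "\<alpha> < 1" and n: "3 \<le> n" and t: "t \<le> n choose 3"
  shows "\<alpha> / (\<alpha> + 3) \<le> measure_pmf.prob (binomial_pmf t (\<alpha> / real n)) {..nat \<lfloor>\<alpha> * N_of n\<rfloor>}"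
proof -
  define p where "p = \<alpha> / real n"
  define \<mu> where "\<mu> = real t * p"
  define d where "d = \<alpha> * N_of n - \<mu>"
  define V where "V = \<mu> * (1 - p)"
  have n3: "3 \<le> real n" using n by simp
  have p: "p \<in> {0..1}" using \<alpha> n3 by (simp add: p_def)
  have mean: "6 * \<mu> \<le> \<alpha> * (real n - 1) * (real n - 2)"
    using triangle_count_mean_bound[of \<alpha> n t] \<alpha> n t by (simp add: \<mu>_def p_def)
  have N: "N_of n = real n * (real n - 1) / 6"
    using real_choose_2[of n] by (simp add: N_of_def)
  have "\<alpha> * N_of n - \<alpha> * (real n - 1) * (real n - 2) / 6 = \<alpha> * (real n - 1) / 3"
    unfolding N by (simp add: field_simps algebra_simps)
  then have margin: "\<alpha> * (real n - 1) / 3 \<le> d" using mean by (simp add: d_def)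
  have "0 < \<alpha> * (real n - 1) / 3" using \<alpha> n3 by simp
  then have "0 < d" using margin by linarith
  have "0 \<le> \<alpha> * N_of n" using \<alpha> by (simp add: N_of_def)
  then have "real t * p + d \<le> real (nat \<lfloor>\<alpha> * N_of n\<rfloor>) + 1" by (simp add: d_def \<mu>_def)
  have "0 \<le> \<mu>" using p by (simp add: \<mu>_def)
  then have "V \<le> \<mu>" using p by (simp add: V_def mult_left_le)
  then have "\<alpha> * V \<le> \<alpha> * (\<alpha> * (real n - 1) * (real n - 2) / 6)"
    using mean \<alpha> by (intro mult_left_mono) auto
  also have "\<dots> \<le> 3 * (\<alpha> * (real n - 1) / 3)\<^sup>2"
    using \<alpha> n3 by (simp add: power2_eq_square field_simps mult_left_mono)
  also have "\<dots> \<le> 3 * d\<^sup>2"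
    using margin \<open>0 < \<alpha> * (real n - 1) / 3\<close> by (simp add: power_mono)
  finally have "\<alpha> * V \<le> 3 * d\<^sup>2" .
  moreover have "0 < V + d\<^sup>2"
    using \<open>0 \<le> \<mu>\<close> p \<open>0 < d\<close> by (simp add: V_def add_nonneg_pos)
  ultimately have "\<alpha> / (\<alpha> + 3) \<le> d\<^sup>2 / (V + d\<^sup>2)"
    using \<alpha> by (simp add: field_simps)
  also have "\<dots> \<le> measure_pmf.prob (binomial_pmf t p) {..nat \<lfloor>\<alpha> * N_of n\<rfloor>}"
    using binomial_atMost_Cantelli[OF p \<open>0 < d\<close>] \<open>real t * p + d \<le> _\<close> by (simp add: V_def \<mu>_def)
  finally show ?thesis by (simp add: p_def)
qed

lemma prob_removal_failure_le_Gstar_failure: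
  assumes mono: "monotone_increasing n P" and S: "partial_system n (set S)" and p: "p \<in> {0..1}"
  shows "measure_pmf.prob (binomial_pmf (card (triangles (graph_of n (set S)))) p) {..M}
           * measure_pmf.prob (R_dist n S M) {x. \<not> P (sys_union S x)}
         \<le> measure_pmf.prob (Gstar_dist n S p) {H. \<not> P (Some (set S \<union> H))}"
proof -
  define E where "E = graph_of n (set S)"
  define t where "t = card (triangles E)"
  define \<rho> where "\<rho> = pmf_of_set (permutations_of_set (triangles E))"
  define q where "q k = measure_pmf.prob \<rho> {\<pi>. \<not> P (Some (set S \<union> delete_conflicts (set (take k \<pi>))))}"
    for k
  define r where "r = measure_pmf.prob (R_dist n S M) {x. \<not> P (sys_union S x)}"
  have fin: "finite (triangles E)" by (simp add: E_def finite_triangles_graph_of)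
  have set_\<rho>: "set_pmf \<rho> = permutations_of_set (triangles E)"
    unfolding \<rho>_def by (rule set_pmf_of_set) (simp_all add: fin)
  have r: "r = measure_pmf.prob \<rho> {\<pi>. \<not> P (sys_union S (greedy_removal E \<pi> M))}"
    unfolding r_def R_dist_def E_def[symmetric] trp_eq_greedy_removal[OF fin order.refl] \<rho>_def
    by (simp add: vimage_def)
  have r_le_q: "r \<le> q k" if "k \<le> M" for k
  proof -
    have "{\<pi>. \<not> P (sys_union S (greedy_removal E \<pi> M))} \<inter> set_pmf \<rho>
        \<subseteq> {\<pi>. \<not> P (Some (set S \<union> delete_conflicts (set (take k \<pi>))))}"
      using not_P_removal_imp_not_P_prefix[OF mono S _ that]
      by (auto simp: set_\<rho> E_def dest: permutations_of_setD(1))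
    then have "measure_pmf.prob \<rho> ({\<pi>. \<not> P (sys_union S (greedy_removal E \<pi> M))} \<inter> set_pmf \<rho>)
        \<le> q k"
      unfolding q_def by (rule measure_pmf.finite_measure_mono) simp
    then show ?thesis by (simp add: r measure_Int_set_pmf)
  qed
  have "Gstar_dist n S p
      = binomial_pmf t p \<bind> (\<lambda>k. map_pmf (\<lambda>\<pi>. delete_conflicts (set (take k \<pi>))) \<rho>)"
    unfolding Gstar_dist_def G_dist_def E_def[symmetric] random_subset_eq_binomial_prefix[OF fin p]
    by (simp add: map_bind_pmf pmf.map_comp o_def t_def \<rho>_def)
  then have G: "measure_pmf.prob (Gstar_dist n S p) {H. \<not> P (Some (set S \<union> H))}
      = (\<Sum>k\<le>t. pmf (binomial_pmf t p) k * q k)"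
    by (simp add: prob_binomial_bind[OF p] q_def vimage_def)
  have "measure_pmf.prob (binomial_pmf t p) {..M} * r
      = (\<Sum>k\<le>t. pmf (binomial_pmf t p) k * (indicator {..M} k * r))"
    unfolding prob_binomial_pmf[OF p] sum_distrib_right mult.assoc ..
  also have "\<dots> \<le> (\<Sum>k\<le>t. pmf (binomial_pmf t p) k * q k)"
    using r_le_q by (intro sum_mono mult_left_mono) (auto simp: indicator_def q_def)
  finally show ?thesis unfolding G r_def[symmetric] t_def[symmetric] E_def[symmetric] .
qed

theorem lemma2p10:
  fixes \<alpha> :: real
  assumes "0 < \<alpha>" and "\<alpha> < 1"
  shows "\<exists>C::real. \<exists>n0::nat. \<forall>n\<ge>n0. (n mod 6 = 1 \<or> n mod 6 = 3) \<longrightarrow>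
     (\<forall>m S P. real m \<le> N_of n - \<alpha> * N_of n \<longrightarrow> S \<in> ordered_systems n m \<longrightarrow>
        monotone_increasing n P \<longrightarrow>
        measure_pmf.prob (R_dist n S (nat \<lfloor>\<alpha> * N_of n\<rfloor>)) {x. \<not> P (sys_union S x)}
          \<le> C * measure_pmf.prob (Gstar_dist n S (\<alpha> / real n)) {H. \<not> P (Some (set S \<union> H))})"
proof (intro exI[of _ "(\<alpha> + 3) / \<alpha>"] exI[of _ 3] allI impI)
  fix n m S P
  assume n: "3 \<le> n" and S: "S \<in> ordered_systems n m" and mono: "monotone_increasing n P"
  let ?t = "card (triangles (graph_of n (set S)))"
  let ?M = "nat \<lfloor>\<alpha> * N_of n\<rfloor>"
  let ?r = "measure_pmf.prob (R_dist n S ?M) {x. \<not> P (sys_union S x)}"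
  let ?g = "measure_pmf.prob (Gstar_dist n S (\<alpha> / real n)) {H. \<not> P (Some (set S \<union> H))}"
  have "\<alpha> / (\<alpha> + 3) \<le> measure_pmf.prob (binomial_pmf ?t (\<alpha> / real n)) {..?M}"
    by (intro binomial_triangle_count_atMost assms n card_triangles_graph_of)
  moreover have "measure_pmf.prob (binomial_pmf ?t (\<alpha> / real n)) {..?M} * ?r \<le> ?g"
    using mono S assms n by (intro prob_removal_failure_le_Gstar_failure) (auto simp: ordered_systems_def)
  ultimately have "\<alpha> / (\<alpha> + 3) * ?r \<le> ?g"
    by (meson measure_nonneg mult_right_mono order_trans)
  then show "?r \<le> (\<alpha> + 3) / \<alpha> * ?g" using assms by (simp add: field_simps)
qed

end
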